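(* Let $n\ge3$ be an integer such that $n+1$ is a perfect square, and let $q\le n$ be a prime with $q>\frac{2n}{3}$ and $q\equiv3\pmod 4$. Then $R_{(n,n)}(x)$ has no factor in $\mathbb{Z}[x]$ whose degree lies in the interval $[q,n]$.
   Context: $\mathrm{He}_k(x)$ denotes the monic probabilists' Hermite polynomial of degree $k$. For a partition $\lambda=(\lambda_1\ge\dots\ge\lambda_r\ge0)$ the degree sequence is $n_\lambda=(\lambda_r,\lambda_{r-1}+1,\dots,\lambda_1+r-1)$ and $\mathrm{He}_\lambda=\mathrm{Wr}[\mathrm{He}_{n_1},\dots,\mathrm{He}_{n_r}]/\prod_{i<j}(n_j-n_i)$. The $2$-core of $\lambda$ is obtained by successively replacing entries $a$ of $n_\lambda$ by $a-2\ge 0$ not already in $n_\lambda$ until impossible; $\mathrm{He}_\lambda(x)=x^{|\bar\lambda|}R_\lambda(x)$ with $R_\lambda(0)\ne0$. For $\lambda=(n,n)$ the $2$-core is empty, so $R_{(n,n)}=\mathrm{He}_{(n,n)}=\mathrm{Wr}[\mathrm{He}_n,\mathrm{He}_{n+1}]$, a monic integer polynomial of degree $2n$. *)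

theory Defs
  imports "HOL-Computational_Algebra.Polynomial" "HOL-Computational_Algebra.Primes"
begin

text \<open>Monic probabilists' Hermite polynomials, via the standard three-term recurrence
  He_0 = 1, He_1 = x, He_(k+2) = x He_(k+1) - (k+1) He_k.\<close>
fun hermite_He :: "nat \<Rightarrow> int poly" where
  "hermite_He 0 = 1"
| "hermite_He (Suc 0) = [:0, 1:]"
| "hermite_He (Suc (Suc k)) = [:0, 1:] * hermite_He (Suc k) - smult (int (Suc k)) (hermite_He k)"

definition wronskian2 :: "int poly \<Rightarrow> int poly \<Rightarrow> int poly" where
  "wronskian2 f g = f * pderiv g - pderiv f * g"

text \<open>He_(n,n) = Wr[He_n, He_(n+1)] / ((n+1) - n); its 2-core is empty so R_(n,n) = He_(n,n).\<close>
definition R_nn :: "nat \<Rightarrow> int poly" where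
  "R_nn n = wronskian2 (hermite_He n) (hermite_He (Suc n))"

end

theory Submission
  imports Defs "HOL-Number_Theory.Cong"
begin

text \<open>Write \<open>n = q + m\<close> with \<open>2m < q\<close> and \<open>R\<^sub>k = Wr[He\<^sub>k, He\<^sub>k\<^sub>+\<^sub>1]\<close>, and argue \<open>q\<close>-adically.
  From \<open>He\<^sub>k' = k He\<^sub>k\<^sub>-\<^sub>1\<close> one gets \<open>He\<^sub>q \<equiv> x\<^sup>q\<close> modulo \<open>q\<close>, hence \<open>He\<^sub>q\<^sub>+\<^sub>j \<equiv> x\<^sup>q He\<^sub>j\<close>, and the
  recurrence \<open>R\<^sub>k\<^sub>+\<^sub>1 = (k + 1) R\<^sub>k + He\<^sub>k\<^sub>+\<^sub>1\<^sup>2\<close> turns this into \<open>R\<^sub>n \<equiv> x\<^sup>2\<^sup>q R\<^sub>m\<close>; moreover the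
  coefficients of \<open>R\<^sub>n\<close> below \<open>x\<^sup>q\<close> are divisible by \<open>q\<^sup>2\<close>, and its constant term by exactly \<open>q\<^sup>2\<close>.
  So the Newton polygon of \<open>R\<^sub>n\<close> starts with a single edge from \<open>(0, 2)\<close> to \<open>(2q, 0)\<close>, whose
  middle lattice point lies over the coefficient of \<open>x\<^sup>q\<close>, which vanishes by parity. Because
  \<open>n + 1\<close> is a square, the residual polynomial of this edge has a root modulo \<open>q\<close> only if \<open>-1\<close>
  is a square modulo \<open>q\<close>, which fails for \<open>q \<equiv> 3 (mod 4)\<close>. Hence the edge cannot be shared by two
  factors: in \<open>R\<^sub>n = P Q\<close> one factor has constant term prime to \<open>q\<close>, and then the other has degree
  at least \<open>2q\<close>, which is incompatible with \<open>q \<le> deg P \<le> n < 3q/2\<close>.\<close>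

abbreviation He :: "nat \<Rightarrow> int poly" where "He \<equiv> hermite_He"

lemma He_Suc_Suc: "He (Suc (Suc k)) = [:0, 1:] * He (Suc k) - of_nat (Suc k) * He k"
  by (simp only: hermite_He.simps of_nat_mult_conv_smult)

lemma coeff_He_parity: "odd (k + i) \<Longrightarrow> coeff (He k) i = 0"
proof (induction k arbitrary: i rule: hermite_He.induct)
  case (3 k)
  then show ?case by (cases i) auto
qed (auto simp: coeff_pCons odd_pos split: nat.splits)

lemma degree_He_le: "degree (He k) \<le> k"
proof (induction k rule: hermite_He.induct)
  case (3 k)
  then have "degree ([:0, 1:] * He (Suc k)) \<le> Suc (Suc k)"
    using degree_mult_le[of "[:0, 1:]" "He (Suc k)"] by simp
  then show ?case
    using 3 degree_smult_le[of "int (Suc k)" "He k"] by (auto intro: degree_diff_le)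
qed auto

lemma coeff_He_self: "coeff (He k) k = 1"
proof (induction k rule: hermite_He.induct)
  case (3 k)
  have "coeff (He k) (Suc (Suc k)) = 0"
    using degree_He_le[of k] by (simp add: coeff_eq_0)
  then show ?case using 3 by simp
qed auto

lemma pderiv_He: "pderiv (He k) = of_nat k * He (k - 1)"
proof (induction k rule: hermite_He.induct)
  case (3 k)
  have ring_id: "B + X * (of_nat (Suc k) * A) - of_nat (Suc k) * D = of_nat (Suc (Suc k)) * B"
    if "B = X * A - D" for A B D X :: "int poly"
    unfolding that by (simp add: algebra_simps)
  have "pderiv (He (Suc (Suc k))) = He (Suc k) + [:0, 1:] * (of_nat (Suc k) * He k) - of_nat (Suc k) * pderiv (He k)"
    using 3 unfolding He_Suc_Suc by (simp add: pderiv_mult pderiv_diff pderiv_add pderiv_pCons del: mult_pCons_left)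
  also have "\<dots> = of_nat (Suc (Suc k)) * He (Suc k)"
  proof (rule ring_id)
    show "He (Suc k) = [:0, 1:] * He k - pderiv (He k)"
      using 3 by (cases k) (simp_all add: He_Suc_Suc del: hermite_He.simps(3))
  qed
  finally show ?case by simp
qed (auto simp: pderiv_pCons)

lemma pderiv_He_Suc: "pderiv (He (Suc k)) = of_nat (Suc k) * He k"
  using pderiv_He[of "Suc k"] by simp

lemma pderiv_He_eq: "pderiv (He k) = [:0, 1:] * He k - He (Suc k)"
  by (cases k) (simp_all add: pderiv_He He_Suc_Suc del: hermite_He.simps(3))

lemma R_nn_eq: "R_nn k = of_nat (Suc k) * He k ^ 2 - pderiv (He k) * He (Suc k)"
  by (simp add: R_nn_def wronskian2_def pderiv_He_Suc power2_eq_square algebra_simps)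

lemma R_nn_0: "R_nn 0 = 1"
  by (simp add: R_nn_eq)

lemma R_nn_Suc: "R_nn (Suc k) = of_nat (Suc k) * R_nn k + He (Suc k) ^ 2"
proof -
  have ring_id: "of_nat (Suc (Suc k)) * B^2 - of_nat (Suc k) * A * (X * B - of_nat (Suc k) * A)
      = of_nat (Suc k) * (of_nat (Suc k) * A^2 - (X * A - B) * B) + B^2" for A B X :: "int poly"
    by (simp add: algebra_simps power2_eq_square)
  show ?thesis
    unfolding R_nn_eq[of "Suc k"] pderiv_He_Suc He_Suc_Suc mult.assoc[symmetric]
    unfolding R_nn_eq[of k] pderiv_He_eq by (rule ring_id)
qed

lemma R_nn_parity: "odd i \<Longrightarrow> coeff (R_nn n) i = 0"
proof (induction n)
  case (Suc n)
  have "coeff (He (Suc n) ^ 2) i = 0"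
    unfolding power2_eq_square coeff_mult
  proof (intro sum.neutral ballI)
    fix j assume "j \<in> {..i}"
    then have "odd (Suc n + j) \<or> odd (Suc n + (i - j))" using Suc.prems by auto
    then show "coeff (He (Suc n)) j * coeff (He (Suc n)) (i - j) = 0"
      by (elim disjE) (simp_all add: coeff_He_parity)
  qed
  then show ?case unfolding R_nn_Suc of_nat_mult_conv_smult using Suc by simp
qed (simp add: R_nn_0 odd_pos)

lemma degree_R_nn_le: "degree (R_nn n) \<le> 2 * n"
proof (induction n)
  case (Suc n)
  have "degree (He (Suc n) ^ 2) \<le> 2 * Suc n"
    using degree_power_le[of "He (Suc n)" 2] degree_He_le[of "Suc n"] by simp
  then show ?case
    using Suc degree_smult_le[of "int (Suc n)" "R_nn n"]
    unfolding R_nn_Suc of_nat_mult_conv_smult by (auto intro: degree_add_le)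
qed (simp add: R_nn_0)

definition dvd_below :: "int \<Rightarrow> nat \<Rightarrow> int poly \<Rightarrow> bool" where
  "dvd_below m N f \<longleftrightarrow> (\<forall>k<N. m dvd coeff f k)"

lemma dvd_below_mono: "dvd_below m N f \<Longrightarrow> N' \<le> N \<Longrightarrow> dvd_below m N' f"
  unfolding dvd_below_def by auto

lemma dvd_below_add: "dvd_below m N f \<Longrightarrow> dvd_below m N g \<Longrightarrow> dvd_below m N (f + g)"
  unfolding dvd_below_def by auto

lemma dvd_below_mult_left: "dvd_below m N f \<Longrightarrow> dvd_below m N (g * f)"
  unfolding dvd_below_def coeff_mult by (auto intro!: dvd_sum dvd_mult)

lemma dvd_below_const_mult: "dvd_below m N f \<Longrightarrow> dvd_below (c * m) N ([:c:] * f)"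
  unfolding dvd_below_def by (auto intro!: mult_dvd_mono)

lemma dvd_below_square: "dvd_below m N f \<Longrightarrow> dvd_below (m ^ 2) N (f ^ 2)"
  unfolding dvd_below_def coeff_mult power2_eq_square by (auto intro!: dvd_sum mult_dvd_mono)

lemma dvd_below_if_cong_monom:
  assumes "[:m:] dvd f - monom 1 N * g"
  shows "dvd_below m N f"
  unfolding dvd_below_def
proof (intro allI impI)
  fix k assume "k < N"
  have "m dvd coeff (f - monom 1 N * g) k"
    using assms const_poly_dvd_iff by blast
  with \<open>k < N\<close> show "m dvd coeff f k"
    by (simp add: coeff_monom_mult)
qed

lemma const_poly_dvd_of_nat_mult: "[:int q:] dvd of_nat q * (f :: int poly)"
  unfolding of_nat_poly by (rule dvd_triv_left)

lemma He_prime_cong: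
  assumes "prime q" "odd q"
  shows "[:int q:] dvd He q - monom 1 q"
  unfolding const_poly_dvd_iff
proof
  fix i
  show "int q dvd coeff (He q - monom 1 q) i"
  proof (cases "0 < i \<and> i < q")
    case True
    then obtain j where j: "i = Suc j" by (cases i) auto
    have "int i * coeff (He q) i = coeff (pderiv (He q)) j"
      using j by (simp add: coeff_pderiv)
    also have "\<dots> = int q * coeff (He (q - 1)) j"
      by (simp add: pderiv_He of_nat_mult_conv_smult)
    finally have "int q dvd int i * coeff (He q) i" by simp
    moreover have "\<not> int q dvd int i"
      using True by (auto dest: dvd_imp_le)
    ultimately show ?thesis
      using True assms(1) by (simp add: prime_dvd_mult_iff)
  next
    case False
    then consider "i = 0" | "q \<le> i" by linarith
    then show ?thesis
    proof cases
      case 1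
      then show ?thesis using assms coeff_He_parity[of q 0] by simp
    next
      case 2
      then show ?thesis
        using coeff_He_self[of q] degree_He_le[of q] by (cases "i = q") (auto simp: coeff_eq_0)
    qed
  qed
qed

lemma He_add_prime_cong:
  assumes "prime q" "odd q"
  shows "[:int q:] dvd He (q + j) - monom 1 q * He j"
proof (induction j rule: hermite_He.induct)
  case 1
  then show ?case using He_prime_cong[OF assms] by simp
next
  case 2
  obtain r where r: "q = Suc r"
    using assms(1) not0_implies_Suc prime_gt_0_nat by blast
  have ring_id: "A2 - M * B = X * (A1 - M) - c * A0" if "A2 = X * A1 - c * A0" "B = X"
    for A0 A1 A2 B M X c :: "int poly"
    unfolding that by (simp add: algebra_simps)
  have "He (q + Suc 0) - monom 1 q * He (Suc 0) = [:0, 1:] * (He q - monom 1 q) - of_nat q * He r"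
    by (rule ring_id) (simp_all only: r add_Suc_right add_0_right He_Suc_Suc hermite_He.simps(2))
  then show ?case
    by (simp only:) (intro dvd_diff dvd_mult He_prime_cong[OF assms] const_poly_dvd_of_nat_mult)
next
  case (3 j)
  have ring_id: "A2 - M * B2 = X * (A1 - M * B1) - of_nat (Suc (q + j)) * (A0 - M * B0) - of_nat q * (M * B0)"
    if "A2 = X * A1 - of_nat (Suc (q + j)) * A0" "B2 = X * B1 - of_nat (Suc j) * B0"
    for A0 A1 A2 B0 B1 B2 M X :: "int poly"
    unfolding that by (simp add: algebra_simps)
  have "He (q + Suc (Suc j)) - monom 1 q * He (Suc (Suc j)) = [:0, 1:] * (He (q + Suc j) - monom 1 q * He (Suc j))
      - of_nat (Suc (q + j)) * (He (q + j) - monom 1 q * He j) - of_nat q * (monom 1 q * He j)"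
    by (rule ring_id) (simp_all only: add_Suc_right He_Suc_Suc)
  then show ?case
    by (simp only:) (intro dvd_diff dvd_mult 3 const_poly_dvd_of_nat_mult)
qed

lemma R_nn_prime_pred_dvd_below:
  assumes "prime q" "odd q"
  shows "dvd_below (int q) q (R_nn (q - 1))"
proof (rule dvd_below_if_cong_monom)
  have "Suc (q - 1) = q"
    using assms(1) prime_gt_0_nat by simp
  then have "R_nn (q - 1) - monom 1 q * - pderiv (He (q - 1))
      = of_nat q * He (q - 1) ^ 2 - pderiv (He (q - 1)) * (He q - monom 1 q)"
    by (simp add: R_nn_eq algebra_simps)
  then show "[:int q:] dvd R_nn (q - 1) - monom 1 q * - pderiv (He (q - 1))"
    by (simp only:) (intro dvd_diff dvd_mult He_prime_cong[OF assms] const_poly_dvd_of_nat_mult)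
qed

lemma R_nn_prime: "prime q \<Longrightarrow> R_nn q = of_nat q * R_nn (q - 1) + He q ^ 2"
  using R_nn_Suc[of "q - 1"] prime_gt_0_nat by simp

lemma monom_double: "monom (1 :: int) (2 * q) = monom 1 q * monom 1 q"
  by (simp add: mult_monom mult_2)

lemma R_nn_add_prime_cong:
  assumes "prime q" "odd q"
  shows "[:int q:] dvd R_nn (q + j) - monom 1 (2 * q) * R_nn j"
proof (induction j)
  case 0
  have "R_nn q - monom 1 (2 * q) * R_nn 0 = of_nat q * R_nn (q - 1) + (He q - monom 1 q) * (He q + monom 1 q)"
    unfolding monom_double by (simp add: R_nn_prime[OF assms(1)] R_nn_0 power2_eq_square algebra_simps)
  then show ?case
    by (simp only: add_0_right) (intro dvd_add const_poly_dvd_of_nat_mult dvd_mult2[OF He_prime_cong[OF assms]])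
next
  case (Suc j)
  define H where "H = He (q + Suc j)"
  have "R_nn (q + Suc j) - monom 1 (2 * q) * R_nn (Suc j)
      = of_nat (Suc j) * (R_nn (q + j) - monom 1 (2 * q) * R_nn j) + of_nat q * R_nn (q + j)
        + (H - monom 1 q * He (Suc j)) * (H + monom 1 q * He (Suc j))"
    unfolding H_def add_Suc_right R_nn_Suc monom_double
    by (simp add: power2_eq_square algebra_simps)
  then show ?case
    unfolding H_def
    by (simp only:) (intro dvd_add dvd_mult[OF Suc] const_poly_dvd_of_nat_mult dvd_mult2[OF He_add_prime_cong[OF assms]])
qed

lemma R_nn_dvd_below_prime_square:
  assumes "prime q" "odd q" "q \<le> n"
  shows "dvd_below (int q ^ 2) q (R_nn n)"
proof -
  have He_dvd_below: "dvd_below (int q) q (He (q + j))" for j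
    by (rule dvd_below_if_cong_monom[OF He_add_prime_cong[OF assms(1,2)]])
  have "dvd_below (int q ^ 2) q (R_nn (q + j))" for j
  proof (induction j)
    case 0
    have "dvd_below (int q ^ 2) q ([:int q:] * R_nn (q - 1))"
      unfolding power2_eq_square by (intro dvd_below_const_mult R_nn_prime_pred_dvd_below assms)
    then show ?case
      using dvd_below_square[OF He_dvd_below[of 0]]
      by (simp add: R_nn_prime[OF assms(1)] of_nat_poly dvd_below_add)
  next
    case (Suc j)
    then show ?case
      unfolding add_Suc_right R_nn_Suc
      by (intro dvd_below_add dvd_below_mult_left dvd_below_square He_dvd_below[of "Suc j", unfolded add_Suc_right])
  qed
  from this[of "n - q"] show ?thesis
    using assms(3) by simp
qed

fun prod_odd_upto :: "nat \<Rightarrow> int" where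
  "prod_odd_upto 0 = 1"
| "prod_odd_upto (Suc k) = (if odd (Suc k) then int (Suc k) else 1) * prod_odd_upto k"

lemma coeff_He_0_square: "coeff (He k) 0 ^ 2 = (if even k then prod_odd_upto k ^ 2 else 0)"
proof (induction k rule: hermite_He.induct)
  case (3 k)
  have "coeff (He (Suc (Suc k))) 0 = - int (Suc k) * coeff (He k) 0"
    by (simp add: algebra_simps)
  then have "coeff (He (Suc (Suc k))) 0 ^ 2 = int (Suc k) ^ 2 * coeff (He k) 0 ^ 2"
    by (simp add: power2_eq_square algebra_simps)
  then show ?case
    using 3 by (auto simp: power2_eq_square algebra_simps)
qed simp_all

lemma coeff_R_nn_0: "coeff (R_nn n) 0 = (if even n then int n + 1 else 1) * prod_odd_upto n ^ 2"
proof (induction n)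
  case (Suc n)
  have "coeff (R_nn (Suc n)) 0 = int (Suc n) * coeff (R_nn n) 0 + coeff (He (Suc n)) 0 ^ 2"
    by (simp add: R_nn_Suc of_nat_poly coeff_mult_0 power2_eq_square)
  then show ?case
    using Suc coeff_He_0_square[of "Suc n"] by (auto simp: power2_eq_square algebra_simps)
qed (simp add: R_nn_0)

lemma prime_not_dvd_odd_factor:
  assumes "prime q" "0 < k" "k < 3 * q" "k \<noteq> q"
  shows "\<not> int q dvd (if odd k then int k else 1)"
proof (cases "odd k")
  case True
  show ?thesis
  proof
    assume "int q dvd (if odd k then int k else 1)"
    then have "q dvd k"
      using True by simp
    then obtain t where t: "k = q * t" ..
    then have "odd t" "t < 3" "t \<noteq> 1"
      using True assms(3,4) by auto
    then show False
      by presburger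
  qed
qed (use assms(1) in auto)

lemma prime_not_dvd_prod_odd_upto:
  assumes "prime q" "k < q"
  shows "\<not> int q dvd prod_odd_upto k"
  using assms(2)
proof (induction k)
  case (Suc k)
  then show ?case
    using assms(1) prime_not_dvd_odd_factor[OF assms(1), of "Suc k"]
    by (auto simp: prime_dvd_mult_iff)
qed (use assms(1) in auto)

lemma prime_dvd_prod_odd_upto_once:
  assumes "prime q" "odd q" "q \<le> k" "k < 3 * q"
  obtains e where "prod_odd_upto k = int q * e" "\<not> int q dvd e"
proof -
  have "\<exists>e. prod_odd_upto (q + j) = int q * e \<and> \<not> int q dvd e" if "q + j < 3 * q" for j
    using that
  proof (induction j)
    case 0
    obtain r where r: "q = Suc r"
      using assms(1) not0_implies_Suc prime_gt_0_nat by blast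
    then show ?case
      using assms prime_not_dvd_prod_odd_upto[OF assms(1), of r] by auto
  next
    case (Suc j)
    then obtain e where "prod_odd_upto (q + j) = int q * e" "\<not> int q dvd e"
      by auto
    then show ?case
      using prime_not_dvd_odd_factor[OF assms(1), of "Suc (q + j)"] Suc.prems assms(1)
      by (auto simp: prime_dvd_mult_iff)
  qed
  then show ?thesis
    using that assms(3,4) le_Suc_ex by blast
qed

lemma prime_dvd_power_diff_self:
  assumes "prime q"
  shows "int q dvd int a ^ q - int a"
proof (induction a)
  case 0
  then show ?case using assms prime_gt_0_nat by (simp add: power_0_left)
next
  case (Suc a)
  define f where "f k = of_nat (q choose k) * int a ^ k" for k
  have q0: "q \<noteq> 0" using assms by auto
  have "(int a + 1) ^ q = (\<Sum>k\<le>q. f k)"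
    unfolding f_def binomial_ring by simp
  also have "\<dots> = f q + f 0 + (\<Sum>k\<in>{1..<q}. f k)"
  proof -
    have "{..q} = insert q (insert 0 {1..<q})" using q0 by auto
    then show ?thesis using q0 by simp
  qed
  also have "f q + f 0 = int a ^ q + 1"
    using q0 by (simp add: f_def)
  finally have "int (Suc a) ^ q - int (Suc a) = (int a ^ q - int a) + (\<Sum>k\<in>{1..<q}. f k)"
    by (simp add: add.commute)
  moreover have "int q dvd (\<Sum>k\<in>{1..<q}. f k)"
  proof (intro dvd_sum)
    fix k assume "k \<in> {1..<q}"
    then have "q dvd (q choose k)" using assms by (intro dvd_choose_prime) auto
    then show "int q dvd f k" unfolding f_def by simp
  qed
  ultimately show ?case
    using Suc.IH by (simp only: dvd_add)
qed

lemma fermat_little_int: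
  assumes "prime q" "\<not> int q dvd y"
  shows "[y ^ (q - 1) = 1] (mod int q)"
proof -
  have q0: "int q > 0" using assms prime_gt_0_nat by simp
  define a where "a = nat (y mod int q)"
  have ya: "[y = int a] (mod int q)"
    using q0 by (simp add: a_def cong_def)
  have "[y * y ^ (q - 1) = y] (mod int q)"
  proof -
    have "y * y ^ (q - 1) = y ^ q"
      using assms(1) prime_gt_0_nat by (simp add: power_eq_if)
    also have "[\<dots> = int a ^ q] (mod int q)"
      using ya by (rule cong_pow)
    also have "[int a ^ q = int a] (mod int q)"
      using prime_dvd_power_diff_self[OF assms(1)] by (simp add: cong_iff_dvd_diff)
    also have "[int a = y] (mod int q)"
      using ya by (rule cong_sym)
    finally show ?thesis .
  qed
  moreover have "coprime y (int q)"
    using assms prime_imp_coprime[of "int q" y] by (simp add: coprime_commute)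
  ultimately show ?thesis
    using cong_mult_lcancel[of y "int q" "y ^ (q - 1)" 1] by simp
qed

lemma prime_3_mod_4_dvd_sum_squares:
  assumes "prime q" "q mod 4 = 3" "int q dvd z ^ 2 + y ^ 2"
  shows "int q dvd y"
proof (rule ccontr)
  assume y: "\<not> int q dvd y"
  have z: "\<not> int q dvd z"
  proof
    assume "int q dvd z"
    then have "int q dvd z ^ 2"
      by (simp add: power2_eq_square)
    then have "int q dvd y ^ 2"
      using assms(3) by (simp add: dvd_add_right_iff)
    then show False
      using assms(1) y by (simp add: prime_dvd_power_iff)
  qed
  define t where "t = q div 2"
  have t: "q - 1 = 2 * t" "odd t"
    using assms(2) unfolding t_def by presburger+
  have "[z ^ 2 = - (y ^ 2)] (mod int q)"
    using assms(3) by (simp add: cong_iff_dvd_diff)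
  then have "[(z ^ 2) ^ t = (- (y ^ 2)) ^ t] (mod int q)"
    by (rule cong_pow)
  moreover have "(z ^ 2) ^ t = z ^ (q - 1)" "(- (y ^ 2)) ^ t = - (y ^ (q - 1))"
    using t by (simp_all only: power_mult[symmetric] power_minus_odd not_False_eq_True)
  ultimately have "[z ^ (q - 1) = - (y ^ (q - 1))] (mod int q)"
    by simp
  have "[1 = z ^ (q - 1)] (mod int q)"
    using fermat_little_int[OF assms(1) z] by (rule cong_sym)
  also have "[z ^ (q - 1) = - (y ^ (q - 1))] (mod int q)"
    by fact
  also have "[- (y ^ (q - 1)) = -1] (mod int q)"
    using fermat_little_int[OF assms(1) y] by (simp add: cong_minus_minus_iff)
  finally have "[1 = -1] (mod int q)" .
  then have "int q dvd int 2"
    by (simp add: cong_iff_dvd_diff)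
  then have "q \<le> 2"
    by (simp only: int_dvd_int_iff) (simp add: dvd_imp_le)
  then show False
    using assms(2) by simp
qed

lemma dvd_sum_diff_subset:
  fixes f :: "'a \<Rightarrow> 'b::comm_ring_1"
  assumes "finite A" "S \<subseteq> A" "\<And>i. i \<in> A - S \<Longrightarrow> m dvd f i"
  shows "m dvd sum f A - sum f S"
proof -
  have "sum f A - sum f S = sum f (A - S)"
    using sum.subset_diff[OF assms(2,1), of f] by simp
  also have "m dvd sum f (A - S)"
    using assms(3) by (rule dvd_sum)
  finally show ?thesis .
qed

lemma first_coeff_not_dvd:
  assumes "\<not> p dvd coeff (P * Q) k"
  obtains a where "dvd_below p a P" "\<not> p dvd coeff P a"
proof -
  have ex: "\<exists>i. \<not> p dvd coeff P i"
  proof (rule ccontr)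
    assume "\<not> (\<exists>i. \<not> p dvd coeff P i)"
    then have "p dvd coeff (P * Q) k"
      unfolding coeff_mult by (simp add: dvd_sum)
    with assms show False ..
  qed
  define a where "a = (LEAST i. \<not> p dvd coeff P i)"
  show ?thesis
  proof (rule that)
    show "dvd_below p a P"
      unfolding dvd_below_def a_def using not_less_Least by blast
    show "\<not> p dvd coeff P a"
      unfolding a_def using ex by (rule LeastI_ex)
  qed
qed

lemma coeff_mult_first_not_dvd:
  fixes p :: int
  assumes "prime p" "dvd_below p a P" "\<not> p dvd coeff P a" "dvd_below p b Q" "\<not> p dvd coeff Q b"
  shows "dvd_below p (a + b) (P * Q)" "\<not> p dvd coeff (P * Q) (a + b)"
proof -
  have term_dvd: "p dvd coeff P i * coeff Q (k - i)" if "i \<le> k" "i \<noteq> a \<or> k \<noteq> a + b" "k \<le> a + b" for i k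
  proof (cases "i < a")
    case True
    then show ?thesis using assms(2) unfolding dvd_below_def by simp
  next
    case False
    then have "k - i < b" using that by auto
    then show ?thesis using assms(4) unfolding dvd_below_def by simp
  qed
  show "dvd_below p (a + b) (P * Q)"
    unfolding dvd_below_def coeff_mult
  proof (intro allI impI dvd_sum)
    fix k i assume "k < a + b" "i \<in> {..k}"
    then show "p dvd coeff P i * coeff Q (k - i)"
      by (intro term_dvd) auto
  qed
  have "p dvd (\<Sum>i\<le>a + b. coeff P i * coeff Q (a + b - i)) - (\<Sum>i\<in>{a}. coeff P i * coeff Q (a + b - i))"
    by (rule dvd_sum_diff_subset) (simp_all add: term_dvd)
  then have diff: "p dvd coeff (P * Q) (a + b) - coeff P a * coeff Q b"
    by (simp add: coeff_mult)
  have "\<not> p dvd coeff P a * coeff Q b"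
    using assms(1,3,5) by (simp add: prime_dvd_mult_iff)
  then show "\<not> p dvd coeff (P * Q) (a + b)"
    using dvd_diff[OF _ diff] by force
qed

lemma first_indices_add:
  fixes p :: int
  assumes "prime p" "dvd_below p a P" "\<not> p dvd coeff P a" "dvd_below p b Q" "\<not> p dvd coeff Q b"
    and "dvd_below p N (P * Q)" "\<not> p dvd coeff (P * Q) N"
  shows "a + b = N"
proof -
  note first = coeff_mult_first_not_dvd[OF assms(1-5)]
  have "\<not> a + b < N"
    using first(2) assms(6) unfolding dvd_below_def by blast
  moreover have "\<not> N < a + b"
    using first(1) assms(7) unfolding dvd_below_def by blast
  ultimately show ?thesis
    by simp
qed

text \<open>The \<open>p\<close>-adic Newton polygon of \<open>f\<close> begins with the single edge from \<open>(0, 2)\<close> to \<open>(2q, 0)\<close>,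
  the coefficient over its middle lattice point vanishes, and its residual polynomial
  \<open>u + f\<^sub>2\<^sub>q y\<^sup>2\<close> has no root modulo \<open>p\<close>.\<close>
definition newton_edge_irreducible :: "int \<Rightarrow> nat \<Rightarrow> int poly \<Rightarrow> bool" where
  "newton_edge_irreducible p q f \<longleftrightarrow>
     dvd_below (p ^ 2) q f \<and> dvd_below p (2 * q) f \<and> coeff f q = 0 \<and>
     (\<exists>u. coeff f 0 = p ^ 2 * u \<and> (\<forall>z. \<not> p dvd z ^ 2 + u * coeff f (2 * q)))"

lemma newton_edge_irreducibleE:
  assumes "newton_edge_irreducible p q f"
  obtains u where "dvd_below (p ^ 2) q f" "dvd_below p (2 * q) f" "coeff f q = 0"
    "coeff f 0 = p ^ 2 * u" "\<not> p dvd u" "\<not> p dvd coeff f (2 * q)"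
    "\<forall>z. \<not> p dvd z ^ 2 + u * coeff f (2 * q)"
proof -
  from assms obtain u where "dvd_below (p ^ 2) q f" "dvd_below p (2 * q) f" "coeff f q = 0"
    "coeff f 0 = p ^ 2 * u" and res: "\<forall>z. \<not> p dvd z ^ 2 + u * coeff f (2 * q)"
    unfolding newton_edge_irreducible_def by blast
  moreover from res[rule_format, of 0] have "\<not> p dvd u" "\<not> p dvd coeff f (2 * q)"
    by auto
  ultimately show ?thesis
    using that by blast
qed

lemma newton_edge_low_index_absurd:
  fixes p u :: int
  assumes "prime p" "0 < a" "dvd_below p a P" "\<not> p dvd coeff P a" "dvd_below p (Suc a) Q"
    and "p ^ 2 dvd coeff (P * Q) a" "coeff (P * Q) 0 = p ^ 2 * u" "\<not> p dvd u"
  shows False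
proof -
  have "p ^ 2 dvd coeff P i * coeff Q (a - i)" if "i < a" for i
    using assms(3,5) that unfolding dvd_below_def power2_eq_square by (simp add: mult_dvd_mono)
  then have "p ^ 2 dvd (\<Sum>i\<le>a. coeff P i * coeff Q (a - i)) - (\<Sum>i\<in>{a}. coeff P i * coeff Q (a - i))"
    by (intro dvd_sum_diff_subset) auto
  then have "p ^ 2 dvd coeff (P * Q) a - coeff P a * coeff Q 0"
    by (simp add: coeff_mult)
  from dvd_diff[OF assms(6) this] have "p ^ 2 dvd coeff P a * coeff Q 0"
    by simp
  moreover have "coprime (p ^ 2) (coeff P a)"
    using assms(1,4) by (simp add: prime_imp_coprime)
  ultimately have "p ^ 2 dvd coeff Q 0"
    using coprime_dvd_mult_right_iff by blast
  moreover have "p dvd coeff P 0"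
    using assms(2,3) unfolding dvd_below_def by simp
  ultimately have "p * p ^ 2 dvd coeff P 0 * coeff Q 0"
    by (simp add: mult_dvd_mono)
  then have "p * p ^ 2 dvd p ^ 2 * u"
    using assms(7) by (simp add: coeff_mult_0)
  then show False
    using assms(1,8) by (simp add: mult.commute)
qed

lemma newton_edge_equal_indices_absurd:
  fixes p u :: int
  assumes "prime p" "0 < q" "dvd_below p q P" "dvd_below p q Q"
    and "coeff (P * Q) q = 0" "coeff (P * Q) 0 = p ^ 2 * u"
    and "\<forall>z. \<not> p dvd z ^ 2 + u * coeff (P * Q) (2 * q)"
  shows False
proof -
  obtain \<alpha> where \<alpha>: "coeff P 0 = p * \<alpha>"
    using assms(2,3) unfolding dvd_below_def by blast
  obtain \<beta> where \<beta>: "coeff Q 0 = p * \<beta>"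
    using assms(2,4) unfolding dvd_below_def by blast
  have p0: "p \<noteq> 0"
    using assms(1) by auto
  have u: "u = \<alpha> * \<beta>"
    using assms(6) p0 by (simp add: coeff_mult_0 \<alpha> \<beta> power2_eq_square algebra_simps)
  define f where "f k i = coeff P i * coeff Q (k - i)" for k i
  have "p ^ 2 dvd sum (f q) {..q} - sum (f q) {0, q}"
  proof (rule dvd_sum_diff_subset)
    fix i assume "i \<in> {..q} - {0, q}"
    then have "p dvd coeff P i" "p dvd coeff Q (q - i)"
      using assms(3,4) unfolding dvd_below_def by auto
    then show "p ^ 2 dvd f q i"
      unfolding f_def power2_eq_square by (rule mult_dvd_mono)
  qed auto
  moreover have "sum (f q) {..q} = 0"
    using assms(5) by (simp add: f_def coeff_mult)
  moreover have "sum (f q) {0, q} = p * (\<alpha> * coeff Q q + \<beta> * coeff P q)"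
    using assms(2) by (simp add: f_def \<alpha> \<beta> algebra_simps)
  ultimately have "p * p dvd p * (\<alpha> * coeff Q q + \<beta> * coeff P q)"
    by (simp add: power2_eq_square)
  then have edge: "p dvd \<alpha> * coeff Q q + \<beta> * coeff P q"
    using p0 by simp
  have "p dvd sum (f (2 * q)) {..2 * q} - sum (f (2 * q)) {q}"
  proof (rule dvd_sum_diff_subset)
    fix i assume "i \<in> {..2 * q} - {q}"
    then show "p dvd f (2 * q) i"
      using assms(3,4) unfolding dvd_below_def f_def by (cases "i < q") auto
  qed auto
  then have top: "p dvd coeff (P * Q) (2 * q) - coeff P q * coeff Q q"
    by (simp add: f_def coeff_mult mult_2)
  define z where "z = \<beta> * coeff P q"
  have "z ^ 2 + u * coeff (P * Q) (2 * q)
      = z * (\<alpha> * coeff Q q + \<beta> * coeff P q) + u * (coeff (P * Q) (2 * q) - coeff P q * coeff Q q)"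
    unfolding z_def u by (simp add: power2_eq_square algebra_simps)
  then have "p dvd z ^ 2 + u * coeff (P * Q) (2 * q)"
    using edge top by simp
  then show False
    using assms(7) by blast
qed

lemma newton_edge_irreducible_degree:
  fixes p :: int
  assumes "prime p" "newton_edge_irreducible p q (P * Q)" "\<not> p dvd coeff P 0"
  shows "2 * q \<le> degree Q"
proof -
  have low: "dvd_below p (2 * q) (P * Q)" and top: "\<not> p dvd coeff (P * Q) (2 * q)"
    using newton_edge_irreducibleE[OF assms(2)] by blast+
  obtain b where b: "dvd_below p b Q" "\<not> p dvd coeff Q b"
    using first_coeff_not_dvd[of p Q P] top by (auto simp: mult.commute)
  have "0 + b = 2 * q"
    by (rule first_indices_add[OF assms(1) _ assms(3) b low top]) (simp add: dvd_below_def)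
  then show ?thesis
    using b(2) by (auto intro: le_degree)
qed

lemma newton_edge_irreducible_factor:
  fixes p :: int
  assumes "prime p" "0 < q" "newton_edge_irreducible p q (P * Q)"
  shows "\<not> p dvd coeff P 0 \<or> \<not> p dvd coeff Q 0"
proof (rule ccontr)
  assume "\<not> ?thesis"
  then have P0: "p dvd coeff P 0" and Q0: "p dvd coeff Q 0"
    by auto
  obtain u where low2: "dvd_below (p ^ 2) q (P * Q)" and low: "dvd_below p (2 * q) (P * Q)"
    and mid: "coeff (P * Q) q = 0" and u: "coeff (P * Q) 0 = p ^ 2 * u" "\<not> p dvd u"
    and top: "\<not> p dvd coeff (P * Q) (2 * q)" and res: "\<forall>z. \<not> p dvd z ^ 2 + u * coeff (P * Q) (2 * q)"
    using newton_edge_irreducibleE[OF assms(3)] by blast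
  obtain a where a: "dvd_below p a P" "\<not> p dvd coeff P a"
    using first_coeff_not_dvd[OF top] by blast
  obtain b where b: "dvd_below p b Q" "\<not> p dvd coeff Q b"
    using first_coeff_not_dvd[of p Q P] top by (auto simp: mult.commute)
  have ab: "a + b = 2 * q"
    by (rule first_indices_add[OF assms(1) a b low top])
  have "0 < a" "0 < b"
    using a(2) b(2) P0 Q0 by (auto intro: gr0I)
  consider "a < q" | "b < q" | "a = q" "b = q"
    using ab by linarith
  then show False
  proof cases
    case 1
    show False
    proof (rule newton_edge_low_index_absurd[OF assms(1) \<open>0 < a\<close> a dvd_below_mono[OF b(1)] _ u])
      show "p ^ 2 dvd coeff (P * Q) a"
        using low2 1 unfolding dvd_below_def by blast
    qed (use 1 ab in auto)
  next
    case 2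
    show False
    proof (rule newton_edge_low_index_absurd[OF assms(1) \<open>0 < b\<close> b dvd_below_mono[OF a(1)] _ _ u(2)])
      show "p ^ 2 dvd coeff (Q * P) b"
        using low2 2 unfolding dvd_below_def by (simp add: mult.commute)
      show "coeff (Q * P) 0 = p ^ 2 * u"
        using u(1) by (simp add: mult.commute)
    qed (use 2 ab in auto)
  next
    case 3
    show False
      using newton_edge_equal_indices_absurd[OF assms(1,2) _ _ mid u(1) res] a(1) b(1) 3 by simp
  qed
qed

lemma newton_edge_irreducible_factor_degree:
  fixes p :: int
  assumes "prime p" "0 < q" "newton_edge_irreducible p q (P * Q)"
  shows "2 * q \<le> degree P \<or> degree P + 2 * q \<le> degree (P * Q)"
  using newton_edge_irreducible_factor[OF assms]
proof
  assume "\<not> p dvd coeff P 0"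
  then have "2 * q \<le> degree Q"
    by (rule newton_edge_irreducible_degree[OF assms(1,3)])
  moreover have "P * Q \<noteq> 0"
    using assms(3) by (rule newton_edge_irreducibleE) auto
  ultimately show ?thesis
    by (simp add: degree_mult_eq)
next
  assume "\<not> p dvd coeff Q 0"
  then show ?thesis
    using newton_edge_irreducible_degree[OF assms(1) assms(3)[unfolded mult.commute[of P]]] by simp
qed

lemma not_dvd_between_self_double: "q < k \<Longrightarrow> k < 2 * q \<Longrightarrow> \<not> q dvd (k :: nat)"
  by (auto elim!: dvdE simp: mult_less_cancel1)

lemma coeff_R_nn_double_prime_cong:
  assumes "prime q" "odd q"
  shows "[coeff (R_nn (q + m)) (2 * q) = coeff (R_nn m) 0] (mod int q)"
proof -
  have "int q dvd coeff (R_nn (q + m) - monom 1 (2 * q) * R_nn m) (2 * q)"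
    using R_nn_add_prime_cong[OF assms, of m] unfolding const_poly_dvd_iff by (rule spec)
  then show ?thesis
    by (simp add: cong_iff_dvd_diff coeff_monom_mult)
qed

lemma constant_factor_prime_shift_cong:
  assumes "odd q"
  shows "[(if even (q + m) then int (q + m) + 1 else 1) * (if even m then int m + 1 else 1)
    = int (q + m) + 1] (mod int q)"
  using assms by (auto simp: cong_iff_dvd_diff)

lemma R_nn_edge_residual:
  assumes "prime q" "q mod 4 = 3" "q \<le> n" "2 * n < 3 * q" "n + 1 = s ^ 2"
  obtains u where "coeff (R_nn n) 0 = int q ^ 2 * u"
    "\<forall>z. \<not> int q dvd z ^ 2 + u * coeff (R_nn n) (2 * q)"
proof -
  define m where "m = n - q"
  define c where "c k = (if even k then int k + 1 else 1)" for k
  have odd_q: "odd q"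
    using assms(2) by presburger
  have n: "n = q + m" and m: "m < q"
    using assms(3,4) unfolding m_def by linarith+
  have cong_top: "[coeff (R_nn n) (2 * q) = coeff (R_nn m) 0] (mod int q)"
    unfolding n by (rule coeff_R_nn_double_prime_cong[OF assms(1) odd_q])
  have "n < 3 * q"
    using assms(4) by linarith
  then obtain e where e: "prod_odd_upto n = int q * e" "\<not> int q dvd e"
    by (rule prime_dvd_prod_odd_upto_once[OF assms(1) odd_q assms(3)])
  have "int s ^ 2 = int n + 1"
    using arg_cong[OF assms(5), of int] by simp
  then have cc: "[c n * c m = int s ^ 2] (mod int q)"
    using constant_factor_prime_shift_cong[OF odd_q, of m] unfolding c_def n by simp
  have "\<not> q dvd n + 1"
    using assms(3,4) prime_gt_1_nat[OF assms(1)] by (intro not_dvd_between_self_double) linarith+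
  then have s: "\<not> int q dvd int s"
    using assms(1,5) by (auto simp flip: of_nat_power simp: int_dvd_int_iff prime_dvd_power_iff)
  have Pm: "\<not> int q dvd prod_odd_upto m"
    by (rule prime_not_dvd_prod_odd_upto[OF assms(1) m])
  show ?thesis
  proof (rule that)
    show "coeff (R_nn n) 0 = int q ^ 2 * (c n * e ^ 2)"
      unfolding coeff_R_nn_0 e(1) c_def by (simp add: power_mult_distrib)
    show "\<forall>z. \<not> int q dvd z ^ 2 + c n * e ^ 2 * coeff (R_nn n) (2 * q)"
    proof (intro allI notI)
      fix z assume dvd: "int q dvd z ^ 2 + c n * e ^ 2 * coeff (R_nn n) (2 * q)"
      have "[c n * e ^ 2 * coeff (R_nn n) (2 * q) = (c n * c m) * (e * prod_odd_upto m) ^ 2] (mod int q)"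
        using cong_mult[OF cong_refl[of "c n * e ^ 2"] cong_top]
        by (simp add: coeff_R_nn_0 c_def m_def power_mult_distrib algebra_simps)
      also have "[(c n * c m) * (e * prod_odd_upto m) ^ 2 = int s ^ 2 * (e * prod_odd_upto m) ^ 2] (mod int q)"
        using cc by (rule cong_mult) (rule cong_refl)
      also have "int s ^ 2 * (e * prod_odd_upto m) ^ 2 = (int s * e * prod_odd_upto m) ^ 2"
        by (simp add: power_mult_distrib)
      finally have "[z ^ 2 + c n * e ^ 2 * coeff (R_nn n) (2 * q) = z ^ 2 + (int s * e * prod_odd_upto m) ^ 2] (mod int q)"
        by (rule cong_add[OF cong_refl])
      with dvd have "int q dvd z ^ 2 + (int s * e * prod_odd_upto m) ^ 2"
        by (simp add: cong_dvd_iff)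
      then have "int q dvd int s * e * prod_odd_upto m"
        by (rule prime_3_mod_4_dvd_sum_squares[OF assms(1,2)])
      then show False
        using assms(1) s e(2) Pm by (simp add: prime_dvd_mult_iff)
    qed
  qed
qed

lemma R_nn_newton_edge_irreducible:
  assumes "prime q" "q mod 4 = 3" "q \<le> n" "2 * n < 3 * q" "n + 1 = s ^ 2"
  shows "newton_edge_irreducible (int q) q (R_nn n)"
proof -
  have odd_q: "odd q"
    using assms(2) by presburger
  have "dvd_below (int q) (2 * q) (R_nn n)"
    using dvd_below_if_cong_monom[OF R_nn_add_prime_cong[OF assms(1) odd_q, of "n - q"]] assms(3) by simp
  moreover obtain u where "coeff (R_nn n) 0 = int q ^ 2 * u" "\<forall>z. \<not> int q dvd z ^ 2 + u * coeff (R_nn n) (2 * q)"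
    using R_nn_edge_residual[OF assms] .
  ultimately show ?thesis
    unfolding newton_edge_irreducible_def
    using R_nn_dvd_below_prime_square[OF assms(1) odd_q assms(3)] R_nn_parity odd_q by blast
qed

theorem mainTheorem14:
  fixes n q :: nat
  assumes "n \<ge> 3"
    and "\<exists>m::nat. n + 1 = m ^ 2"
    and "prime q" and "q \<le> n"
    and "3 * q > 2 * n"
    and "q mod 4 = 3"
  shows "\<not> (\<exists>p :: int poly. p dvd R_nn n \<and> q \<le> degree p \<and> degree p \<le> n)"
proof
  assume "\<exists>p :: int poly. p dvd R_nn n \<and> q \<le> degree p \<and> degree p \<le> n"
  then obtain P Q where PQ: "R_nn n = P * Q" and deg_P: "q \<le> degree P" "degree P \<le> n"
    by (auto elim: dvdE)
  obtain s where "n + 1 = s ^ 2"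
    using assms(2) by blast
  then have "newton_edge_irreducible (int q) q (P * Q)"
    using R_nn_newton_edge_irreducible[OF assms(3,6,4)] assms(5) PQ by simp
  then have "2 * q \<le> degree P \<or> degree P + 2 * q \<le> degree (P * Q)"
    using assms(3) prime_gt_0_nat by (intro newton_edge_irreducible_factor_degree) auto
  moreover have "degree (P * Q) \<le> 2 * n"
    using degree_R_nn_le[of n] PQ by simp
  ultimately show False
    using deg_P assms(5) by linarith
qed

end
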